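(* Let $\psi:\mathbb{N}^*\to\mathbb{N}^*\sqcup\mathcal{A}$ be a function such that for every $n\ge1$ either $\psi(n)\in\mathcal{A}$ or $1\le\psi(n)\le n-1$, and let $(\pi_i)_{i\ge1}$ and $w_\psi$ be the associated palindromes and infinite word. Then the following are equivalent: (a) $\psi$ is reduced; (b) the palindromic prefixes of $w_\psi$ are exactly the words $\pi_i$, $i\ge1$.
   Context: $\mathcal{A}$ is an alphabet (finite or infinite) disjoint from $\mathbb{N}^*=\{1,2,\dots\}$; the empty word $\varepsilon$ is a palindrome. Associated words: $\pi_1=\varepsilon$ and, for $i\ge1$: if $\psi(i)\in\mathcal{A}$, $\pi_{i+1}=\pi_i\,\psi(i)\,\pi_i$; if $\psi(i)\in\mathbb{N}^*$, then $\pi_{\psi(i)}$ is a prefix of $\pi_i$, and writing $\pi_i=\pi_{\psi(i)}b_i$, $\pi_{i+1}=\pi_ib_i$. Each $\pi_i$ is a palindrome and a proper prefix of $\pi_{i+1}$; $w_\psi$ is the infinite word having all $\pi_i$ as prefixes. Let $(t_k)_{k\ge0}$ be the (finite or infinite) family, in increasing order, of all $n\ge1$ such that either $\psi(n)\in\mathcal{A}$ or $1\le\psi(n)\le n-2$ (so $t_0=1$). $\psi$ is reduced if for every $k\ge1$ such that $t_k$ exists: $\psi(t_k)\ne\psi(t_{k-1})$, and either $\psi(t_k)\in\mathcal{A}$ or $\psi(t_k)<t_{k-1}$. *)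

theory Defs
  imports Main
begin

text \<open>The directive sequence psi maps positive integers to letters (Inl a, a in the
alphabet 'a) or to positive integers (Inr m).\<close>

text \<open>pal psi i is the associated palindrome pi_i (meaningful for i >= 1; pal psi 0 = []).
  pi_1 = empty; pi_(i+1) = pi_i a pi_i if psi(i) = a is a letter;
  pi_(i+1) = pi_i b_i where pi_i = pi_(psi i) b_i if psi(i) is an integer.\<close>
function pal :: "(nat \<Rightarrow> 'a + nat) \<Rightarrow> nat \<Rightarrow> 'a list" where
  "pal psi n = (if n \<le> 1 then [] else
     (case psi (n - 1) of
        Inl a \<Rightarrow> pal psi (n - 1) @ a # pal psi (n - 1)
      | Inr m \<Rightarrow> (if m < n then pal psi (n - 1) @ drop (length (pal psi m)) (pal psi (n - 1))
                  else undefined)))"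
  by pat_completeness auto
termination by (relation "measure (\<lambda>(psi, n). n)") auto

declare pal.simps [simp del]

definition wpsi :: "(nat \<Rightarrow> 'a + nat) \<Rightarrow> nat \<Rightarrow> 'a" where
  "wpsi psi k = pal psi (LEAST n. k < length (pal psi n)) ! k"

definition admissible :: "(nat \<Rightarrow> 'a + nat) \<Rightarrow> bool" where
  "admissible psi \<longleftrightarrow> (\<forall>n\<ge>1. (\<exists>a. psi n = Inl a) \<or> (\<exists>m. psi n = Inr m \<and> 1 \<le> m \<and> m \<le> n - 1))"

definition tset :: "(nat \<Rightarrow> 'a + nat) \<Rightarrow> nat set" where
  "tset psi = {n. n \<ge> 1 \<and> ((\<exists>a. psi n = Inl a) \<or> (\<exists>m. psi n = Inr m \<and> 1 \<le> m \<and> m \<le> n - 2))}"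

text \<open>Reduced: for each consecutive pair t_(k-1) < t_k of the increasing enumeration of tset,
  psi(t_k) differs from psi(t_(k-1)) and psi(t_k) is a letter or psi(t_k) < t_(k-1).\<close>
definition reduced :: "(nat \<Rightarrow> 'a + nat) \<Rightarrow> bool" where
  "reduced psi \<longleftrightarrow>
     (\<forall>p n. p \<in> tset psi \<and> n \<in> tset psi \<and> p < n \<and> (\<forall>j. p < j \<and> j < n \<longrightarrow> j \<notin> tset psi) \<longrightarrow>
        psi n \<noteq> psi p \<and> ((\<exists>a. psi n = Inl a) \<or> (\<exists>m. psi n = Inr m \<and> m < p)))"

definition is_prefix_of_inf :: "'a list \<Rightarrow> (nat \<Rightarrow> 'a) \<Rightarrow> bool" where
  "is_prefix_of_inf u w \<longleftrightarrow> u = map w [0..<length u]"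

end

theory Submission
  imports Defs
begin

text \<open>
  A palindrome w has the palindromic prefix u iff w has period |w| - |u|.  Since every pi_n is a
  palindromic prefix of pi_(n+1), the palindromic prefixes of w_psi are exactly the pi_i iff, for
  every i \<ge> 1, the gap d_i = |pi_(i+1)| - |pi_i| is the least period of pi_(i+1).  The gaps are
  constant between two consecutive t's p < i, so inductively pi_i has least period d_p.  If psi is
  not reduced at (p, i), then d_p is a proper divisor of d_i that is still a period of pi_(i+1).  If
  it is reduced, Fine and Wilf's theorem turns a smaller period of pi_(i+1) into a multiple of d_p
  dividing d_i; this only leaves the case of two distinct letters psi(p) and psi(i), which that
  period would force to be equal.
\<close>

section \<open>Periods of words\<close>

definition period :: "'b list \<Rightarrow> nat \<Rightarrow> bool" where
  "period w e \<longleftrightarrow> (\<forall>k. k + e < length w \<longrightarrow> w ! k = w ! (k + e))"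

definition least_period :: "'b list \<Rightarrow> nat \<Rightarrow> bool" where
  "least_period w e \<longleftrightarrow> 0 < e \<and> period w e \<and> (\<forall>e'. 0 < e' \<longrightarrow> e' < e \<longrightarrow> \<not> period w e')"

lemma period_take: "period w e \<Longrightarrow> period (take n w) e"
  unfolding period_def by auto

lemma period_nth_mod:
  assumes "period w e" "0 < e" "x < length w"
  shows "w ! x = w ! (x mod e)"
  using assms(3)
proof (induction x rule: less_induct)
  case (less x)
  show ?case
  proof (cases "x < e")
    case False
    then have "w ! (x - e) = w ! ((x - e) mod e)"
      using less assms(2) by simp
    moreover have "w ! (x - e) = w ! x"
      using assms(1) False less.prems unfolding period_def by (metis le_add_diff_inverse2 not_less)
    ultimately show ?thesis
      using False by (simp add: le_mod_geq)
  qed simp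
qed

lemma period_nth_cong:
  assumes "period w e" "x < length w" "y < length w" "x mod e = y mod e"
  shows "w ! x = w ! y"
  using assms period_nth_mod[OF assms(1)] by (cases "e = 0") auto

lemma period_diff:
  assumes "period w p" "period w q" "p < q" "p + q \<le> length w"
  shows "period w (q - p)"
  unfolding period_def
proof (intro allI impI)
  have P: "w ! k = w ! (k + p)" if "k + p < length w" for k
    using assms(1) that unfolding period_def by blast
  have Q: "w ! k = w ! (k + q)" if "k + q < length w" for k
    using assms(2) that unfolding period_def by blast
  fix k assume k: "k + (q - p) < length w"
  show "w ! k = w ! (k + (q - p))"
  proof (cases "k + q < length w")
    case True
    then show ?thesis
      using P[of "k + (q - p)"] Q[of k] assms(3) by simp
  next
    case False
    then have "p \<le> k"
      using assms(4) by linarith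
    then show ?thesis
      using P[of "k - p"] Q[of "k - p"] k assms(3) by simp
  qed
qed

text \<open>Fine and Wilf's theorem in the weak form p + q \<le> |w|, by Euclid's subtractive algorithm.\<close>
lemma period_gcd:
  assumes "period w p" "period w q" "p + q \<le> length w"
  shows "period w (gcd p q)"
  using assms
proof (induction "p + q" arbitrary: p q rule: less_induct)
  case less
  consider "p = 0 \<or> q = 0 \<or> p = q" | "0 < p" "p < q" | "0 < q" "q < p"
    by linarith
  then show ?case
  proof cases
    case 1
    then show ?thesis using less.prems by auto
  next
    case 2
    then have "period w (gcd p (q - p))"
      using less.hyps[of p "q - p"] less.prems period_diff[of w p q] by simp
    then show ?thesis
      using 2 by (metis gcd.commute gcd_diff1_nat less_imp_le_nat)
  next
    case 3
    then have "period w (gcd q (p - q))"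
      using less.hyps[of q "p - q"] less.prems period_diff[of w q p] by simp
    then show ?thesis
      using 3 by (metis gcd.commute gcd_diff1_nat less_imp_le_nat)
  qed
qed

lemma period_dvd_lift:
  assumes "period w D" "period (take D w) e" "e dvd D" "0 < D"
  shows "period w e"
proof -
  have "0 < e" "e \<le> D"
    using assms(3,4) by (auto intro: dvd_imp_le dvd_pos_nat)
  have nth_mod_e: "w ! x = w ! (x mod e)" if "x < length w" for x
  proof -
    have "x mod D < length (take D w)"
      using that assms(4) by (simp add: order.strict_trans1[OF mod_less_eq_dividend])
    then have "w ! x = take D w ! (x mod D mod e)"
      using period_nth_mod[OF assms(1,4) that] period_nth_mod[OF assms(2) \<open>0 < e\<close>] assms(4) by simp
    also have "\<dots> = w ! (x mod e)"
      using assms(3) \<open>0 < e\<close> \<open>e \<le> D\<close> by (simp add: mod_mod_cancel order_less_le_trans[OF mod_less_divisor])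
    finally show ?thesis .
  qed
  show ?thesis
    unfolding period_def using nth_mod_e by simp
qed

lemma proper_dvd_imp_double_le:
  fixes a b :: nat
  assumes "a dvd b" "0 < b" "a \<noteq> b"
  shows "2 * a \<le> b"
proof -
  obtain c where c: "b = a * c"
    using assms(1) by (rule dvdE)
  then have "2 \<le> c"
    using assms(2,3) by (cases c) auto
  then show ?thesis
    using c by simp
qed

lemma least_period_le: "least_period w D \<Longrightarrow> period w g \<Longrightarrow> 0 < g \<Longrightarrow> D \<le> g"
  unfolding least_period_def by (meson not_less)

lemma least_period_dvd:
  assumes "least_period w D" "period w g" "0 < g" "2 * g \<le> length w + 1"
  shows "D dvd g"
proof (cases "D + g \<le> length w")
  case True
  have "D \<le> gcd D g"
    using least_period_le[OF assms(1) period_gcd[OF _ assms(2) True]] assms(1,3)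
    unfolding least_period_def by simp
  moreover have "gcd D g \<le> D"
    using assms(1) unfolding least_period_def by (simp add: gcd_le1_nat)
  ultimately show ?thesis
    by (metis antisym gcd_dvd2)
next
  case False
  then have "D = g"
    using least_period_le[OF assms(1-3)] assms(4) by linarith
  then show ?thesis
    by simp
qed

lemma proper_divisor_period_if_not_least:
  assumes "period w q" "0 < q" "\<not> least_period w q" "2 * q \<le> length w + 1"
  obtains g where "period w g" "0 < g" "g dvd q" "2 * g \<le> q"
proof -
  obtain r where r: "period w r" "0 < r" "r < q"
    using assms(1-3) unfolding least_period_def by blast
  define g where "g = gcd r q"
  have "period w g" "0 < g" "g dvd q" "g < q"
    using period_gcd[OF r(1) assms(1)] r assms(4) unfolding g_def
    by (auto simp: order.strict_trans1[OF gcd_le1_nat])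
  then show ?thesis
    using that proper_dvd_imp_double_le[of g q] assms(2) by simp
qed

lemma period_if_palindromic_prefix:
  assumes "rev w = w" "rev u = u" "take (length u) w = u"
  shows "period w (length w - length u)"
proof -
  obtain s where w: "w = u @ s"
    using assms(3) by (metis append_take_drop_id)
  then have w': "w = rev s @ u"
    using assms(1,2) by (metis rev_append)
  show ?thesis
    unfolding period_def
  proof (intro allI impI)
    fix k assume "k + (length w - length u) < length w"
    then have "k < length u"
      using w by simp
    then have "w ! k = u ! k"
      using w by (simp add: nth_append)
    moreover have "w ! (length s + k) = u ! k"
      by (subst w') (simp add: nth_append)
    ultimately show "w ! k = w ! (k + (length w - length u))"
      using w by (simp add: add.commute)
  qed
qed

lemma palindromic_prefix_if_period:
  assumes "rev w = w" "period w e"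
  shows "rev (take (length w - e) w) = take (length w - e) w"
proof (rule nth_equalityI)
  fix k assume "k < length (rev (take (length w - e) w))"
  then have k: "k < length w - e" by simp
  have "rev (take (length w - e) w) ! k = w ! (length w - e - Suc k)"
    using k by (simp add: rev_nth)
  also have "\<dots> = rev w ! (length w - e - Suc k)"
    by (simp only: assms(1))
  also have "\<dots> = w ! (k + e)"
    using k by (simp add: rev_nth Suc_diff_Suc add.commute)
  also have "\<dots> = w ! k"
    using assms(2) k unfolding period_def by simp
  finally show "rev (take (length w - e) w) ! k = take (length w - e) w ! k"
    using k by simp
qed simp

section \<open>The palindromes \<pi>_n\<close>

locale admissible_directive =
  fixes psi :: "nat \<Rightarrow> 'a + nat"
  assumes admissible: "admissible psi"
begin

abbreviation \<pi> :: "nat \<Rightarrow> 'a list" where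
  "\<pi> \<equiv> pal psi"

abbreviation L :: "nat \<Rightarrow> nat" where
  "L n \<equiv> length (\<pi> n)"

definition d :: "nat \<Rightarrow> nat" where
  "d n = L (Suc n) - L n"

lemma pal_le_1: "n \<le> 1 \<Longrightarrow> \<pi> n = []"
  by (subst pal.simps) simp

lemma pal_Suc_Inl: "1 \<le> n \<Longrightarrow> psi n = Inl a \<Longrightarrow> \<pi> (Suc n) = \<pi> n @ a # \<pi> n"
  by (subst pal.simps) simp

lemma pal_Suc_Inr:
  "1 \<le> n \<Longrightarrow> psi n = Inr m \<Longrightarrow> m \<le> n \<Longrightarrow>
    \<pi> (Suc n) = \<pi> n @ drop (L m) (\<pi> n)"
  by (subst pal.simps) simp

lemma psi_Inr: "1 \<le> n \<Longrightarrow> psi n = Inr m \<Longrightarrow> 1 \<le> m \<and> m < n"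
  using admissible unfolding admissible_def by fastforce

lemma psi_1: "\<exists>a. psi 1 = Inl a"
  using admissible unfolding admissible_def by (cases "psi 1") auto

lemma pal_Suc_append: "\<exists>s. \<pi> (Suc n) = \<pi> n @ s"
proof (cases "1 \<le> n")
  case True
  then show ?thesis
    using pal_Suc_Inl[OF True] pal_Suc_Inr[OF True] psi_Inr[OF True]
    by (cases "psi n") fastforce+
qed (simp add: pal_le_1)

lemma pal_append: "m \<le> n \<Longrightarrow> \<exists>s. \<pi> n = \<pi> m @ s"
proof (induction n rule: dec_induct)
  case (step n)
  then show ?case
    using pal_Suc_append[of n] by (metis append.assoc)
qed simp

lemma take_pal: "m \<le> n \<Longrightarrow> take (L m) (\<pi> n) = \<pi> m"
  using pal_append by (metis append_eq_conv_conj)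

lemma nth_pal: "m \<le> n \<Longrightarrow> k < L m \<Longrightarrow> \<pi> n ! k = \<pi> m ! k"
  using take_pal by (metis nth_take)

lemma period_pal_mono: "m \<le> n \<Longrightarrow> period (\<pi> n) e \<Longrightarrow> period (\<pi> m) e"
  using period_take[of "\<pi> n" e "L m"] take_pal[of m n] by simp

lemma L_mono: "m \<le> n \<Longrightarrow> L m \<le> L n"
  using pal_append by fastforce

lemma L_strict_mono: "1 \<le> m \<Longrightarrow> m < n \<Longrightarrow> L m < L n"
proof (induction n arbitrary: m)
  case (Suc n)
  have "L n < L (Suc n)"
  proof (cases "psi n")
    case (Inl a)
    then show ?thesis
      using Suc.prems pal_Suc_Inl by simp
  next
    case (Inr k)
    have "1 \<le> n"
      using Suc.prems by simp
    then have "1 \<le> k" "k < n"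
      using psi_Inr Inr by auto
    then show ?thesis
      using Suc.IH Suc.prems pal_Suc_Inr[of n k] Inr by simp
  qed
  then show ?case
    using Suc by (metis less_Suc_eq order.strict_trans)
qed simp

lemma L_Suc_ge: "n \<le> L (Suc n)"
proof (induction n)
  case (Suc n)
  have "L (Suc n) < L (Suc (Suc n))"
    by (rule L_strict_mono) simp_all
  then show ?case
    using Suc.IH by linarith
qed simp

lemma L_less_iff: "1 \<le> m \<Longrightarrow> 1 \<le> n \<Longrightarrow> L m < L n \<longleftrightarrow> m < n"
  by (metis L_strict_mono linorder_neqE_nat order.asym)

lemma L_inj: "1 \<le> m \<Longrightarrow> 1 \<le> n \<Longrightarrow> L m = L n \<Longrightarrow> m = n"
  by (metis L_less_iff linorder_neqE_nat order.irrefl)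

lemma pal_palindrome: "rev (\<pi> n) = \<pi> n"
proof (induction n rule: less_induct)
  case (less n)
  show ?case
  proof (cases "2 \<le> n")
    case True
    then obtain k where n: "n = Suc k" and "1 \<le> k"
      by (metis Suc_1 Suc_le_D Suc_le_mono)
    show ?thesis
    proof (cases "psi k")
      case (Inl a)
      then show ?thesis
        using pal_Suc_Inl[OF \<open>1 \<le> k\<close>] less.IH[of k] n by simp
    next
      case (Inr m)
      then have "m < k"
        using psi_Inr[OF \<open>1 \<le> k\<close>] by simp
      obtain b where b: "\<pi> k = \<pi> m @ b"
        using pal_append[of m k] \<open>m < k\<close> by auto
      have "\<pi> k = rev (\<pi> k)"
        using less.IH[of k] n by simp
      also have "\<dots> = rev b @ \<pi> m"
        using b less.IH[of m] \<open>m < k\<close> n by simp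
      finally have k_rev: "\<pi> k = rev b @ \<pi> m" .
      have "rev (\<pi> n) = rev (\<pi> k @ b)"
        using pal_Suc_Inr[OF \<open>1 \<le> k\<close> Inr] \<open>m < k\<close> b n by simp
      also have "\<dots> = rev b @ \<pi> m @ b"
        using less.IH[of k] b n by simp
      also have "\<dots> = \<pi> n"
        using pal_Suc_Inr[OF \<open>1 \<le> k\<close> Inr] \<open>m < k\<close> b n k_rev by simp
      finally show ?thesis .
    qed
  qed (simp add: pal_le_1)
qed

lemma L_Suc: "L (Suc n) = L n + d n"
  using L_mono[of n "Suc n"] by (simp add: d_def)

lemma d_Inl: "1 \<le> n \<Longrightarrow> psi n = Inl a \<Longrightarrow> d n = L n + 1"
  using pal_Suc_Inl by (simp add: d_def)

lemma nth_pal_Inl: "1 \<le> n \<Longrightarrow> psi n = Inl a \<Longrightarrow> \<pi> (Suc n) ! L n = a"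
  using pal_Suc_Inl by (simp add: nth_append)

lemma d_Inr:
  assumes "1 \<le> n" "psi n = Inr m"
  shows "d n = L n - L m" "L m < L n"
proof -
  have "1 \<le> m" "m < n"
    using psi_Inr[OF assms] by auto
  then show "L m < L n"
    by (rule L_strict_mono)
  then show "d n = L n - L m"
    using pal_Suc_Inr[OF assms] \<open>m < n\<close> by (simp add: d_def)
qed

lemma d_pos: "1 \<le> n \<Longrightarrow> 0 < d n"
  using L_strict_mono[of n "Suc n"] by (simp add: d_def)

lemma d_le: "1 \<le> n \<Longrightarrow> d n \<le> L n + 1"
  using d_Inl d_Inr(1) by (cases "psi n") fastforce+

lemma period_d: "period (\<pi> (Suc n)) (d n)"
  using period_if_palindromic_prefix[OF pal_palindrome pal_palindrome take_pal[of n "Suc n"]]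
  by (simp add: d_def)

lemma take_d_pal:
  assumes "d n \<le> L n"
  shows "take (d n) (\<pi> (Suc n)) = take (d n) (\<pi> n)"
proof -
  have "take (d n) (\<pi> n) = take (d n) (take (L n) (\<pi> (Suc n)))"
    using take_pal[of n "Suc n"] by simp
  then show ?thesis
    using assms by (simp add: min_def)
qed

lemma period_Suc_if_dvd_d:
  assumes "1 \<le> n" "period (take (d n) (\<pi> (Suc n))) e" "e dvd d n"
  shows "period (\<pi> (Suc n)) e"
  using period_dvd_lift[OF period_d assms(2,3) d_pos[OF assms(1)]] .

lemma period_Suc_if_dvd_d_le:
  assumes "1 \<le> n" "d n \<le> L n" "period (\<pi> n) e" "e dvd d n"
  shows "period (\<pi> (Suc n)) e"
  using period_Suc_if_dvd_d[OF assms(1) _ assms(4)] period_take[OF assms(3)] take_d_pal[OF assms(2)]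
  by simp

end

section \<open>Least periods and reducedness\<close>

definition consecutive_t :: "(nat \<Rightarrow> 'a + nat) \<Rightarrow> nat \<Rightarrow> nat \<Rightarrow> bool" where
  "consecutive_t psi p i \<longleftrightarrow>
     p \<in> tset psi \<and> i \<in> tset psi \<and> p < i \<and> (\<forall>j. p < j \<and> j < i \<longrightarrow> j \<notin> tset psi)"

definition reduced_at :: "(nat \<Rightarrow> 'a + nat) \<Rightarrow> nat \<Rightarrow> nat \<Rightarrow> bool" where
  "reduced_at psi p i \<longleftrightarrow> psi i \<noteq> psi p \<and> ((\<exists>a. psi i = Inl a) \<or> (\<exists>m. psi i = Inr m \<and> m < p))"

lemma reduced_iff_reduced_at:
  "reduced psi \<longleftrightarrow> (\<forall>p i. consecutive_t psi p i \<longrightarrow> reduced_at psi p i)"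
  unfolding reduced_def consecutive_t_def reduced_at_def by blast

context admissible_directive
begin

lemma tset_ge_1: "j \<in> tset psi \<Longrightarrow> 1 \<le> j"
  unfolding tset_def by simp

lemma one_in_tset: "1 \<in> tset psi"
  using psi_1 unfolding tset_def by auto

lemma psi_not_tset: "1 \<le> j \<Longrightarrow> j \<notin> tset psi \<Longrightarrow> psi j = Inr (j - 1)"
  using admissible unfolding admissible_def tset_def by force

lemma psi_tset_Inr: "j \<in> tset psi \<Longrightarrow> psi j = Inr m \<Longrightarrow> 1 \<le> m \<and> m + 2 \<le> j"
  unfolding tset_def by auto

lemma d_not_tset:
  assumes "1 \<le> j" "j \<notin> tset psi"
  shows "d j = d (j - 1)"
proof -
  have "psi j = Inr (j - 1)"
    using psi_not_tset[OF assms] .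
  then have "d j = L j - L (j - 1)"
    using d_Inr(1)[OF assms(1)] by simp
  then show ?thesis
    using assms(1) by (simp add: d_def)
qed

lemma previous_t:
  assumes "i \<in> tset psi" "1 < i"
  obtains p where "consecutive_t psi p i"
proof -
  define S where "S = {j \<in> tset psi. j < i}"
  have "finite S" "1 \<in> S"
    using one_in_tset assms(2) unfolding S_def by auto
  then have "Max S \<in> S" "\<And>j. j \<in> S \<Longrightarrow> j \<le> Max S"
    by (auto intro: Max_in)
  then have "consecutive_t psi (Max S) i"
    using assms(1) unfolding consecutive_t_def S_def by (auto simp: not_less[symmetric])
  then show ?thesis
    by (rule that)
qed

lemma consecutive_t_bounds: "consecutive_t psi p i \<Longrightarrow> 1 \<le> p \<and> p < i"
  unfolding consecutive_t_def using tset_ge_1 by blast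

lemma d_consecutive_t:
  assumes "consecutive_t psi p i" "p \<le> j" "j < i"
  shows "d j = d p"
  using assms(2,3)
proof (induction j rule: dec_induct)
  case (step j)
  then have "Suc j \<notin> tset psi" "1 \<le> Suc j"
    using assms(1) unfolding consecutive_t_def by auto
  then show ?case
    using step d_not_tset by simp
qed simp

lemma L_consecutive_t:
  assumes "consecutive_t psi p i" "p \<le> j" "j \<le> i"
  shows "L j = L p + (j - p) * d p"
  using assms(2,3)
proof (induction j rule: dec_induct)
  case (step j)
  then show ?case
    using L_Suc[of j] d_consecutive_t[OF assms(1), of j] by (simp add: Suc_diff_le)
qed simp

lemma period_consecutive_t:
  assumes "consecutive_t psi p i"
  shows "period (\<pi> i) (d p)"
proof -
  have "p \<le> i - 1" "i - 1 < i" "Suc (i - 1) = i"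
    using assms unfolding consecutive_t_def by auto
  then show ?thesis
    using period_d[of "i - 1"] d_consecutive_t[OF assms, of "i - 1"] by simp
qed

lemma nth_consecutive_t_Inl:
  assumes "consecutive_t psi p i" "psi p = Inl b" "j < i - p"
  shows "\<pi> i ! (L p + j * d p) = b"
proof -
  have "1 \<le> p" "Suc p \<le> i"
    using consecutive_t_bounds[OF assms(1)] by auto
  have "L p + j * d p < L i"
    using L_consecutive_t[OF assms(1), of i] assms(3) d_pos[OF \<open>1 \<le> p\<close>] by simp
  moreover have "L p < L i"
    using L_strict_mono \<open>1 \<le> p\<close> \<open>Suc p \<le> i\<close> by simp
  ultimately have "\<pi> i ! (L p + j * d p) = \<pi> i ! L p"
    by (intro period_nth_cong[OF period_consecutive_t[OF assms(1)]]) simp_all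
  also have "\<dots> = b"
    using nth_pal[OF \<open>Suc p \<le> i\<close>] nth_pal_Inl[OF \<open>1 \<le> p\<close> assms(2)] d_Inl[OF \<open>1 \<le> p\<close> assms(2)] L_Suc[of p]
    by simp
  finally show ?thesis .
qed

lemma d_gt_if_least_period:
  assumes "least_period (\<pi> (Suc p)) (d p)" "p \<in> tset psi" "psi p = Inr m"
  shows "L m + 1 < d p"
proof (rule ccontr)
  assume "\<not> L m + 1 < d p"
  have "1 \<le> m" "m + 2 \<le> p"
    using psi_tset_Inr[OF assms(2,3)] by auto
  define k where "k = p - 1"
  then have p: "p = Suc k" and "m < k"
    using \<open>m + 2 \<le> p\<close> by auto
  then have "1 \<le> k" "L m < L k"
    using L_strict_mono[OF \<open>1 \<le> m\<close>] \<open>1 \<le> m\<close> by auto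
  have "d p = L p - L m" "L p = L k + d k"
    using d_Inr(1)[OF _ assms(3)] L_Suc[of k] p by auto
  then have "d k < d p" "d k + d p \<le> L p" "d p \<le> L p"
    using \<open>L m < L k\<close> \<open>\<not> L m + 1 < d p\<close> by linarith+
  define g where "g = gcd (d k) (d p)"
  have "period (\<pi> p) (d k)" "period (\<pi> p) (d p)"
    using period_d[of k] period_pal_mono[OF _ period_d[of p], of p] p by simp_all
  then have "period (\<pi> p) g"
    unfolding g_def using period_gcd \<open>d k + d p \<le> L p\<close> by blast
  then have "period (\<pi> (Suc p)) g"
    using period_Suc_if_dvd_d_le \<open>d p \<le> L p\<close> p unfolding g_def by simp
  moreover have "0 < g" "g < d p"
    unfolding g_def using d_pos[OF \<open>1 \<le> k\<close>] \<open>d k < d p\<close>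
    by (simp_all add: order.strict_trans1[OF gcd_le1_nat])
  ultimately show False
    using assms(1) unfolding least_period_def by blast
qed

lemma not_dvd_d_Inr_if_reduced_at:
  assumes cons: "consecutive_t psi p i" and red: "reduced_at psi p i"
    and least: "least_period (\<pi> (Suc p)) (d p)" and "psi i = Inr m"
  shows "\<not> d p dvd d i"
proof
  assume "d p dvd d i"
  have "1 \<le> p" "p < i"
    using consecutive_t_bounds[OF cons] by auto
  have "m < p" "psi p \<noteq> Inr m"
    using red \<open>psi i = Inr m\<close> unfolding reduced_at_def by auto
  moreover have "1 \<le> m"
    using psi_Inr[of i m] \<open>psi i = Inr m\<close> \<open>p < i\<close> \<open>1 \<le> p\<close> by simp
  ultimately have "L m < L p"
    using L_strict_mono by blast
  have "d i = (L p - L m) + (i - p) * d p"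
    using d_Inr(1)[OF _ \<open>psi i = Inr m\<close>] L_consecutive_t[OF cons, of i] \<open>1 \<le> p\<close> \<open>p < i\<close> \<open>L m < L p\<close>
    by simp
  then have dvd_m: "d p dvd L p - L m"
    using \<open>d p dvd d i\<close> by (simp add: dvd_add_left_iff)
  show False
  proof (cases "psi p")
    case (Inl b)
    then show False
      using d_Inl[OF \<open>1 \<le> p\<close>] dvd_imp_le[OF dvd_m] \<open>L m < L p\<close> by fastforce
  next
    case (Inr m0)
    then have d_p: "d p = L p - L m0" and "L m0 < L p" "1 \<le> m0"
      using d_Inr[OF \<open>1 \<le> p\<close>] psi_Inr[OF \<open>1 \<le> p\<close>] by auto
    have "L m \<noteq> L m0"
      using L_inj \<open>1 \<le> m\<close> \<open>1 \<le> m0\<close> \<open>psi p \<noteq> Inr m\<close> Inr by blast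
    then have "2 * d p \<le> L p - L m"
      using proper_dvd_imp_double_le[OF dvd_m] d_p \<open>L m < L p\<close> \<open>L m0 < L p\<close> by simp
    then have "d p \<le> L m0 + 1"
      using d_p by linarith
    then show False
      using d_gt_if_least_period[OF least _ Inr] cons unfolding consecutive_t_def by simp
  qed
qed

lemma not_dvd_d_Inl_Inr:
  assumes cons: "consecutive_t psi p i" and least: "least_period (\<pi> (Suc p)) (d p)"
    and "psi i = Inl a" "psi p = Inr m0"
  shows "\<not> d p dvd d i"
proof
  assume dvd: "d p dvd d i"
  have "1 \<le> p" "p < i"
    using consecutive_t_bounds[OF cons] by auto
  have "d p = L p - L m0" "L m0 < L p"
    using d_Inr[OF \<open>1 \<le> p\<close> \<open>psi p = Inr m0\<close>] by auto
  then have "d i = (L m0 + 1) + (i - p + 1) * d p"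
    using d_Inl[OF _ \<open>psi i = Inl a\<close>] L_consecutive_t[OF cons, of i] \<open>1 \<le> p\<close> \<open>p < i\<close> by simp
  then have "d p dvd L m0 + 1"
    using dvd dvd_add_times_triv_right_iff[of "d p" "L m0 + 1" "i - p + 1"] by simp
  then show False
    using d_gt_if_least_period[OF least _ \<open>psi p = Inr m0\<close>] cons dvd_imp_le
    unfolding consecutive_t_def by fastforce
qed

lemma period_append_consecutive_t_Inl:
  assumes cons: "consecutive_t psi p i" and "psi p = Inl a"
  shows "period (\<pi> i @ [a]) (d p)"
  unfolding period_def
proof (intro allI impI)
  fix x assume x: "x + d p < length (\<pi> i @ [a])"
  show "(\<pi> i @ [a]) ! x = (\<pi> i @ [a]) ! (x + d p)"
  proof (cases "x + d p < L i")
    case True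
    then show ?thesis
      using period_consecutive_t[OF cons] unfolding period_def by (simp add: nth_append)
  next
    case False
    then have "x + d p = L i"
      using x by simp
    have "p < i"
      using consecutive_t_bounds[OF cons] by simp
    then have "i - p = Suc (i - p - 1)"
      by simp
    then have "(i - p) * d p = d p + (i - p - 1) * d p"
      by (metis mult_Suc)
    then have "x = L p + (i - p - 1) * d p"
      using \<open>x + d p = L i\<close> L_consecutive_t[OF cons, of i] \<open>p < i\<close> by simp
    then have "\<pi> i ! x = a"
      using nth_consecutive_t_Inl[OF cons \<open>psi p = Inl a\<close>, of "i - p - 1"] \<open>p < i\<close> by simp
    then show ?thesis
      using \<open>x + d p = L i\<close> by (simp add: nth_append)
  qed
qed

lemma period_Suc_consecutive_t_same_letter:
  assumes cons: "consecutive_t psi p i" and "psi p = Inl a" "psi i = Inl a"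
  shows "period (\<pi> (Suc i)) (d p)"
proof -
  have "1 \<le> p" "p < i"
    using consecutive_t_bounds[OF cons] by auto
  have "take (d i) (\<pi> (Suc i)) = \<pi> i @ [a]"
    using pal_Suc_Inl[OF _ \<open>psi i = Inl a\<close>] d_Inl[OF _ \<open>psi i = Inl a\<close>] \<open>1 \<le> p\<close> \<open>p < i\<close> by simp
  moreover have "d i = (i - p + 1) * d p"
    using d_Inl[OF _ \<open>psi i = Inl a\<close>] d_Inl[OF \<open>1 \<le> p\<close> \<open>psi p = Inl a\<close>] L_consecutive_t[OF cons, of i]
      \<open>1 \<le> p\<close> \<open>p < i\<close> by simp
  ultimately show ?thesis
    using period_Suc_if_dvd_d period_append_consecutive_t_Inl[OF cons \<open>psi p = Inl a\<close>] \<open>1 \<le> p\<close> \<open>p < i\<close>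
    by simp
qed

lemma same_letter_if_period_Suc_consecutive_t:
  assumes cons: "consecutive_t psi p i" and "psi p = Inl b" "psi i = Inl a"
    and g: "period (\<pi> (Suc i)) g" "d p dvd g" "0 < g" "g \<le> L i"
  shows "a = b"
proof -
  have "1 \<le> p" "p < i"
    using consecutive_t_bounds[OF cons] by auto
  have L_i: "L i = L p + (i - p) * d p"
    using L_consecutive_t[OF cons, of i] \<open>p < i\<close> by simp
  obtain c where c: "g = c * d p"
    using g(2) by (metis dvd_def mult.commute)
  have "c * d p < (i - p + 1) * d p"
    using c g(4) L_i d_Inl[OF \<open>1 \<le> p\<close> \<open>psi p = Inl b\<close>] by simp
  then have "c \<le> i - p"
    using mult_less_cancel2[of c "d p" "i - p + 1"] by linarith
  then have "(i - p) * d p = (i - p - c) * d p + c * d p"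
    by (metis add_mult_distrib le_add_diff_inverse2)
  then have pos: "L i - g = L p + (i - p - c) * d p"
    using c L_i by simp
  have "\<pi> (Suc i) ! (L i - g) = \<pi> (Suc i) ! L i"
    using g(1,3,4) L_Suc[of i] d_pos[of i] \<open>1 \<le> p\<close> \<open>p < i\<close> unfolding period_def by simp
  also have "\<dots> = a"
    using nth_pal_Inl[OF _ \<open>psi i = Inl a\<close>] \<open>1 \<le> p\<close> \<open>p < i\<close> by simp
  finally have "\<pi> i ! (L i - g) = a"
    using nth_pal[of i "Suc i"] g(3,4) by simp
  moreover have "\<pi> i ! (L i - g) = b"
    using pos nth_consecutive_t_Inl[OF cons \<open>psi p = Inl b\<close>, of "i - p - c"] g(3) c \<open>c \<le> i - p\<close>
    by (cases c) simp_all
  ultimately show ?thesis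
    by simp
qed

lemma d_multiple_if_Inr:
  assumes cons: "consecutive_t psi p i" and "psi i = Inr m" "psi p = Inr m \<or> p \<le> m"
  obtains c where "2 \<le> c" "d i = c * d p"
proof -
  have "1 \<le> p" "p < i"
    using consecutive_t_bounds[OF cons] by auto
  have L_i: "L i = L p + (i - p) * d p"
    using L_consecutive_t[OF cons, of i] \<open>p < i\<close> by simp
  have d_i: "d i = L i - L m"
    using d_Inr(1)[OF _ assms(2)] \<open>1 \<le> p\<close> \<open>p < i\<close> by simp
  show ?thesis
  proof (cases "psi p = Inr m")
    case True
    then have "d i = (i - p + 1) * d p"
      using d_i d_Inr[OF \<open>1 \<le> p\<close> True] L_i by simp
    moreover have "2 \<le> i - p + 1"
      using \<open>p < i\<close> by simp
    ultimately show ?thesis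
      using that by blast
  next
    case False
    then have "p \<le> m" "m + 2 \<le> i"
      using assms(3) psi_tset_Inr[OF _ assms(2)] cons unfolding consecutive_t_def by auto
    then have L_m: "L m = L p + (m - p) * d p"
      using L_consecutive_t[OF cons, of m] by simp
    have "i - p = (i - m) + (m - p)"
      using \<open>p \<le> m\<close> \<open>m + 2 \<le> i\<close> by simp
    then have "(i - p) * d p = (i - m) * d p + (m - p) * d p"
      by (metis add_mult_distrib)
    then have "d i = (i - m) * d p"
      using d_i L_i L_m by simp
    moreover have "2 \<le> i - m"
      using \<open>m + 2 \<le> i\<close> by simp
    ultimately show ?thesis
      using that by blast
  qed
qed

lemma period_Suc_if_not_reduced_at:
  assumes cons: "consecutive_t psi p i" and "\<not> reduced_at psi p i"
  shows "period (\<pi> (Suc i)) (d p)" "d p < d i"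
proof -
  have "1 \<le> p" "p < i"
    using consecutive_t_bounds[OF cons] by auto
  consider a where "psi p = Inl a" "psi i = Inl a" | m where "psi i = Inr m" "psi p = Inr m \<or> p \<le> m"
    using \<open>\<not> reduced_at psi p i\<close> unfolding reduced_at_def
    by (cases "psi i"; cases "psi p") (auto simp: not_less)
  then have "period (\<pi> (Suc i)) (d p) \<and> d p < d i"
  proof cases
    case 1
    have "L p < L i"
      using L_strict_mono \<open>1 \<le> p\<close> \<open>p < i\<close> by blast
    then show ?thesis
      using period_Suc_consecutive_t_same_letter[OF cons 1] d_Inl[OF \<open>1 \<le> p\<close> 1(1)]
        d_Inl[OF _ 1(2)] \<open>p < i\<close> by simp
  next
    case 2
    then obtain c where c: "2 \<le> c" "d i = c * d p"
      using d_multiple_if_Inr[OF cons] by blast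
    have "2 * d p \<le> c * d p"
      using c(1) by (rule mult_le_mono1)
    then have "d p < d i"
      using c(2) d_pos[OF \<open>1 \<le> p\<close>] by linarith
    moreover have "period (\<pi> (Suc i)) (d p)"
      using period_Suc_if_dvd_d_le[OF _ _ period_consecutive_t[OF cons]] d_Inr[OF _ 2(1)] c(2)
        \<open>1 \<le> p\<close> \<open>p < i\<close> by simp
    ultimately show ?thesis
      by blast
  qed
  then show "period (\<pi> (Suc i)) (d p)" "d p < d i"
    by blast+
qed

lemma least_period_if_reduced_at:
  assumes cons: "consecutive_t psi p i" and red: "reduced_at psi p i"
    and below: "\<And>j. 1 \<le> j \<Longrightarrow> j < i \<Longrightarrow> least_period (\<pi> (Suc j)) (d j)"
  shows "least_period (\<pi> (Suc i)) (d i)"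
proof (rule ccontr)
  assume "\<not> least_period (\<pi> (Suc i)) (d i)"
  have "1 \<le> p" "p < i"
    using consecutive_t_bounds[OF cons] by auto
  then have "1 \<le> i" "d i \<le> L i + 1"
    using d_le by auto
  moreover have "2 * d i \<le> L (Suc i) + 1"
    using L_Suc[of i] \<open>d i \<le> L i + 1\<close> by simp
  ultimately obtain g where g: "period (\<pi> (Suc i)) g" "0 < g" "g dvd d i" "2 * g \<le> d i"
    using proper_divisor_period_if_not_least[OF period_d d_pos] \<open>\<not> least_period _ _\<close> by blast
  have "least_period (\<pi> i) (d p)"
    using below[of "i - 1"] d_consecutive_t[OF cons, of "i - 1"] \<open>1 \<le> p\<close> \<open>p < i\<close> by simp
  moreover have "period (\<pi> i) g"
    using period_pal_mono[OF _ g(1)] by simp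
  ultimately have "d p dvd g"
    using least_period_dvd g(2,4) \<open>d i \<le> L i + 1\<close> by fastforce
  then have "d p dvd d i"
    using g(3) by (rule dvd_trans)
  then obtain a b where "psi i = Inl a" "psi p = Inl b" "a \<noteq> b"
    using not_dvd_d_Inr_if_reduced_at[OF cons red below[OF \<open>1 \<le> p\<close> \<open>p < i\<close>]]
      not_dvd_d_Inl_Inr[OF cons below[OF \<open>1 \<le> p\<close> \<open>p < i\<close>]] red
    unfolding reduced_at_def by (cases "psi i"; cases "psi p") auto
  moreover have "g \<le> L i"
    using g(2,4) d_Inl[OF \<open>1 \<le> i\<close> \<open>psi i = Inl a\<close>] by simp
  ultimately show False
    using same_letter_if_period_Suc_consecutive_t[OF cons _ _ g(1) \<open>d p dvd g\<close> g(2)] by blast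
qed

lemma least_period_iff_reduced_at:
  assumes "consecutive_t psi p i" "\<And>j. 1 \<le> j \<Longrightarrow> j < i \<Longrightarrow> least_period (\<pi> (Suc j)) (d j)"
  shows "least_period (\<pi> (Suc i)) (d i) \<longleftrightarrow> reduced_at psi p i"
  using least_period_if_reduced_at[OF assms(1) _ assms(2)] period_Suc_if_not_reduced_at[OF assms(1)]
    d_pos consecutive_t_bounds[OF assms(1)] unfolding least_period_def by blast

lemma least_period_Suc_not_tset:
  assumes "1 \<le> i" "i \<notin> tset psi" "least_period (\<pi> i) (d (i - 1))"
  shows "least_period (\<pi> (Suc i)) (d i)"
  using assms period_d[of i] d_pos[of i] d_not_tset period_pal_mono[of i "Suc i"]
  unfolding least_period_def by auto

lemma least_period_if_reduced:
  assumes red: "reduced psi" and "1 \<le> i"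
  shows "least_period (\<pi> (Suc i)) (d i)"
  using assms(2)
proof (induction i rule: less_induct)
  case (less i)
  consider "i \<notin> tset psi" | "i = 1" | p where "consecutive_t psi p i"
    using previous_t less.prems by (metis le_neq_implies_less)
  then show ?case
  proof cases
    case 1
    then have "2 \<le> i"
      using one_in_tset less.prems by (cases "i = 1") auto
    then show ?thesis
      using least_period_Suc_not_tset[OF less.prems 1] less.IH[of "i - 1"] by simp
  next
    case 2
    then have "d i = 1"
      using psi_1 d_Inl pal_le_1[of 1] by auto
    then show ?thesis
      using period_d[of i] unfolding least_period_def by simp
  next
    case 3
    then show ?thesis
      using least_period_iff_reduced_at less.IH red unfolding reduced_iff_reduced_at by blast
  qed
qed

lemma reduced_iff_least_periods: "reduced psi \<longleftrightarrow> (\<forall>i\<ge>1. least_period (\<pi> (Suc i)) (d i))"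
  using least_period_if_reduced least_period_iff_reduced_at consecutive_t_bounds
  unfolding reduced_iff_reduced_at by (meson order.trans less_imp_le)

end

section \<open>Palindromic prefixes of w_psi\<close>

context admissible_directive
begin

lemma wpsi_nth: "k < L n \<Longrightarrow> wpsi psi k = \<pi> n ! k"
  unfolding wpsi_def by (metis (mono_tags, lifting) LeastI Least_le nth_pal)

lemma map_wpsi: "l \<le> L n \<Longrightarrow> map (wpsi psi) [0..<l] = take l (\<pi> n)"
  by (rule nth_equalityI) (auto simp: wpsi_nth)

lemma is_prefix_of_wpsi_iff:
  "length u \<le> L n \<Longrightarrow> is_prefix_of_inf u (wpsi psi) \<longleftrightarrow> u = take (length u) (\<pi> n)"
  unfolding is_prefix_of_inf_def by (simp add: map_wpsi)

lemma L_interval: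
  obtains i where "1 \<le> i" "L i \<le> l" "l < L (Suc i)"
proof -
  define N where "N = (LEAST n. l < L n)"
  have "l < L (Suc (Suc l))"
    using L_Suc_ge[of "Suc l"] by simp
  then have "l < L N"
    unfolding N_def by (rule LeastI)
  then have "2 \<le> N"
    using pal_le_1[of N] by (cases "N \<le> 1") auto
  moreover have "\<not> l < L (N - 1)"
    using not_less_Least[of "N - 1" "\<lambda>n. l < L n"] \<open>2 \<le> N\<close> unfolding N_def by simp
  ultimately show ?thesis
    using that[of "N - 1"] \<open>l < L N\<close> by (simp add: Suc_diff_le)
qed

lemma palindromic_prefix_between_iff:
  assumes "1 \<le> i"
  shows "(\<exists>u. is_prefix_of_inf u (wpsi psi) \<and> rev u = u \<and> L i < length u \<and> length u < L (Suc i))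
    \<longleftrightarrow> \<not> least_period (\<pi> (Suc i)) (d i)"
proof
  assume "\<exists>u. is_prefix_of_inf u (wpsi psi) \<and> rev u = u \<and> L i < length u \<and> length u < L (Suc i)"
  then obtain u where u: "is_prefix_of_inf u (wpsi psi)" "rev u = u" "L i < length u" "length u < L (Suc i)"
    by blast
  then have "take (length u) (\<pi> (Suc i)) = u"
    using is_prefix_of_wpsi_iff[of u "Suc i"] by simp
  then have "period (\<pi> (Suc i)) (L (Suc i) - length u)"
    using period_if_palindromic_prefix[OF pal_palindrome u(2)] by simp
  moreover have "0 < L (Suc i) - length u" "L (Suc i) - length u < d i"
    using u(3,4) L_Suc[of i] by auto
  ultimately show "\<not> least_period (\<pi> (Suc i)) (d i)"
    unfolding least_period_def by blast
next
  assume "\<not> least_period (\<pi> (Suc i)) (d i)"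
  then obtain e where e: "0 < e" "e < d i" "period (\<pi> (Suc i)) e"
    using period_d d_pos[OF assms] unfolding least_period_def by blast
  define u where "u = take (L (Suc i) - e) (\<pi> (Suc i))"
  have "rev u = u"
    unfolding u_def by (rule palindromic_prefix_if_period[OF pal_palindrome e(3)])
  moreover have "is_prefix_of_inf u (wpsi psi)"
    using is_prefix_of_wpsi_iff[of u "Suc i"] unfolding u_def by simp
  moreover have "L i < length u" "length u < L (Suc i)"
    using e(1,2) L_Suc[of i] unfolding u_def by auto
  ultimately show "\<exists>u. is_prefix_of_inf u (wpsi psi) \<and> rev u = u \<and> L i < length u \<and> length u < L (Suc i)"
    by blast
qed

lemma palindromic_prefixes_iff_least_periods:
  "{u. is_prefix_of_inf u (wpsi psi) \<and> rev u = u} = {\<pi> i | i. i \<ge> 1}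
    \<longleftrightarrow> (\<forall>i\<ge>1. least_period (\<pi> (Suc i)) (d i))"
proof
  assume eq: "{u. is_prefix_of_inf u (wpsi psi) \<and> rev u = u} = {\<pi> i | i. i \<ge> 1}"
  show "\<forall>i\<ge>1. least_period (\<pi> (Suc i)) (d i)"
  proof (intro allI impI, rule ccontr)
    fix i assume "1 \<le> i" "\<not> least_period (\<pi> (Suc i)) (d i)"
    then obtain u where u: "is_prefix_of_inf u (wpsi psi)" "rev u = u" "L i < length u" "length u < L (Suc i)"
      using palindromic_prefix_between_iff by blast
    then obtain j where "u = \<pi> j" "1 \<le> j"
      using eq by blast
    then show False
      using u(3,4) L_less_iff[of i j] L_less_iff[of j "Suc i"] \<open>1 \<le> i\<close> by auto
  qed
next
  assume least: "\<forall>i\<ge>1. least_period (\<pi> (Suc i)) (d i)"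
  have "u \<in> {\<pi> i | i. i \<ge> 1}" if "is_prefix_of_inf u (wpsi psi)" "rev u = u" for u
  proof -
    obtain i where i: "1 \<le> i" "L i \<le> length u" "length u < L (Suc i)"
      by (rule L_interval)
    then have "length u = L i"
      using least palindromic_prefix_between_iff[OF i(1)] that by fastforce
    then have "u = \<pi> i"
      using is_prefix_of_wpsi_iff[of u i] that(1) by simp
    then show ?thesis
      using i(1) by blast
  qed
  moreover have "is_prefix_of_inf (\<pi> i) (wpsi psi)" for i
    using is_prefix_of_wpsi_iff[of "\<pi> i" i] by simp
  ultimately show "{u. is_prefix_of_inf u (wpsi psi) \<and> rev u = u} = {\<pi> i | i. i \<ge> 1}"
    using pal_palindrome by blast
qed

end

theorem theorem4p12:
  fixes psi :: "nat \<Rightarrow> 'a + nat"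
  assumes "admissible psi"
  shows "reduced psi \<longleftrightarrow>
           {u. is_prefix_of_inf u (wpsi psi) \<and> rev u = u} = {pal psi i | i. i \<ge> 1}"
proof -
  interpret admissible_directive psi
    using assms by unfold_locales
  show ?thesis
    using reduced_iff_least_periods palindromic_prefixes_iff_least_periods by simp
qed

end
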